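(* Work in the upper half-space model $\{(x,y,z): z>0\}$ of $\mathbb{H}^3$, where the height of a point $(x,y,z)$ is $\log z$. Let $\gamma$ be a non-vertical geodesic whose highest point has height $0$, and let $v_0 \in N^1(\gamma)$ be the unit normal vector to $\gamma$ based at its highest point and pointing straight up. Let $v \in N^1(\gamma)$, let $h$ be the height of the highest point of the geodesic ray starting at $v$, and write $v - v_0 = x + i\theta \in \mathbb{C}/2\pi i\mathbb{Z}$ with $|\theta| \le \pi$. Then $|x| < 2e^{-h}$ always, and $|\theta| \le 2e^{-h}$ whenever $h > 0$.
   Context: $N^1(\gamma)$ is the unit normal bundle of $\gamma$; it is a torsor for $\mathbb{C}/2\pi i\mathbb{Z}$, where the real part translates the base point along $\gamma$ (signed distance) and the imaginary part rotates the normal vector about $\gamma$. For $v, v_0 \in N^1(\gamma)$, $v - v_0$ denotes the unique element of $\mathbb{C}/2\pi i\mathbb{Z}$ carrying $v_0$ to $v$. *)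

theory Defs
  imports "HOL-Analysis.Analysis"
begin

type_synonym pt3 = "real \<times> real \<times> real"

definition zc :: "pt3 \<Rightarrow> real" where "zc p = snd (snd p)"

definition in_H3 :: "pt3 \<Rightarrow> bool" where "in_H3 p \<longleftrightarrow> zc p > 0"

definition height :: "pt3 \<Rightarrow> real" where "height p = ln (zc p)"

definition hdist :: "pt3 \<Rightarrow> pt3 \<Rightarrow> real" where
  "hdist p q = arcosh (1 + (norm (p - q))\<^sup>2 / (2 * zc p * zc q))"

definition geodesic_ray :: "(real \<Rightarrow> pt3) \<Rightarrow> pt3 \<Rightarrow> pt3 \<Rightarrow> bool" where
  "geodesic_ray r p w \<longleftrightarrow>
     r 0 = p \<and> (\<forall>s\<ge>0. in_H3 (r s)) \<and>
     (\<forall>s\<ge>0. \<forall>t\<ge>0. hdist (r s) (r t) = \<bar>s - t\<bar>) \<and>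
     (\<exists>k>0. (r has_vector_derivative (k *\<^sub>R w)) (at 0 within {0..}))"

definition ray_top_height :: "(real \<Rightarrow> pt3) \<Rightarrow> real" where
  "ray_top_height r = (SUP s\<in>{0..}. height (r s))"

text \<open>The non-vertical geodesic gamma whose highest point (height 0) lies above the
  boundary point (c1,c2), contained in the vertical plane through (c1,c2) with unit
  horizontal direction (u1,u2); parametrised by signed arclength s from its highest point.\<close>
definition gam :: "real \<Rightarrow> real \<Rightarrow> real \<Rightarrow> real \<Rightarrow> real \<Rightarrow> pt3" where
  "gam c1 c2 u1 u2 s = (c1 + tanh s * u1, c2 + tanh s * u2, 1 / cosh s)"

text \<open>Parallel unit normal frame along gamma (Euclidean directions):
  nv is the normal inside the vertical plane of gamma (pointing straight up at the
  top of gamma), nh the horizontal normal to that plane. Both are parallel along gamma.\<close>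
definition nv :: "real \<Rightarrow> real \<Rightarrow> real \<Rightarrow> pt3" where
  "nv u1 u2 s = (tanh s * u1, tanh s * u2, 1 / cosh s)"

definition nh :: "real \<Rightarrow> real \<Rightarrow> pt3" where
  "nh u1 u2 = (- u2, u1, 0)"

text \<open>The element v of N^1(gamma) with v - v0 = x + i theta, where v0 is the upward unit
  normal at the top of gamma: base point gam x, direction cos theta nv + sin theta nh.\<close>
definition nb_base :: "real \<Rightarrow> real \<Rightarrow> real \<Rightarrow> real \<Rightarrow> real \<Rightarrow> pt3" where
  "nb_base c1 c2 u1 u2 x = gam c1 c2 u1 u2 x"

definition nb_dir :: "real \<Rightarrow> real \<Rightarrow> real \<Rightarrow> real \<Rightarrow> pt3" where
  "nb_dir u1 u2 x \<theta> = cos \<theta> *\<^sub>R nv u1 u2 x + sin \<theta> *\<^sub>R nh u1 u2"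

end

theory Submission
  imports Defs "HOL-Real_Asymp.Real_Asymp"
begin

text \<open>Write z for the Euclidean height coordinate. A unit speed geodesic ray r whose initial unit
  direction w has height component w3 satisfies z(r s) (cosh s - w3 sinh s) = z(r 0). This follows
  from the distance formula alone: the ray has Euclidean speed z(r 0) at s = 0, and differentiating
  cosh (hdist (r t) (r s)) = cosh (t - s) at t = 0 produces a vector whose inner product with the
  initial velocity attains the Cauchy-Schwarz bound, which pins down its height component.

  For the ray of v = v0 + x + i \<theta> we have z(r 0) = 1 / cosh x and w3 = cos \<theta> / cosh x, so
  exp (- h) is at least the infimum over s \<ge> 0 of cosh x cosh s - cos \<theta> sinh s. If cos \<theta> \<le> 0 this
  infimum is cosh x \<ge> 1, so h \<le> 0, and |x| < 2 cosh x gives the claim. Otherwise it is at least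
  sqrt (cosh x ^ 2 - cos \<theta> ^ 2) = sqrt (sinh x ^ 2 + sin \<theta> ^ 2) and |\<theta>| \<le> \<pi> / 2, so
  |x| < 2 |sinh x| and |\<theta>| \<le> 2 |sin \<theta>| finish the proof.\<close>

lemma abs_lt_two_cosh: "\<bar>x\<bar> < 2 * cosh (x::real)"
proof -
  have "1 + \<bar>x\<bar> \<le> exp \<bar>x\<bar>" by (rule exp_ge_add_one_self)
  moreover have "2 * cosh x = exp \<bar>x\<bar> + exp (- \<bar>x\<bar>)"
    by (cases "x \<ge> 0") (simp_all add: cosh_def)
  ultimately show ?thesis
    using exp_gt_zero[of "- \<bar>x\<bar>"] by linarith
qed

lemma abs_lt_two_abs_sinh: "x \<noteq> 0 \<Longrightarrow> \<bar>x\<bar> < 2 * \<bar>sinh (x::real)\<bar>"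
proof -
  assume "x \<noteq> 0"
  have "1 + \<bar>x\<bar> \<le> exp \<bar>x\<bar>" by (rule exp_ge_add_one_self)
  moreover have "exp (- \<bar>x\<bar>) < 1" using \<open>x \<noteq> 0\<close> by simp
  moreover have "2 * \<bar>sinh x\<bar> = exp \<bar>x\<bar> - exp (- \<bar>x\<bar>)"
    by (cases "x \<ge> 0") (simp_all add: sinh_def)
  ultimately show ?thesis by linarith
qed

lemma abs_le_two_abs_sin:
  fixes t :: real
  assumes "\<bar>t\<bar> \<le> pi / 2"
  shows "\<bar>t\<bar> \<le> 2 * \<bar>sin t\<bar>"
proof -
  have taylor: "(\<Sum>m<3. sin_coeff m * t ^ m) = t" "fact 3 = (6::real)"
    by (simp_all add: numeral_3_eq_3 sin_coeff_def)
  have "\<bar>sin t - t\<bar> \<le> inverse 6 * \<bar>t\<bar> ^ 3"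
    using Maclaurin_sin_bound[of t 3] unfolding taylor .
  moreover have "pi \<le> 16 / 5" using pi_approx by simp
  then have "\<bar>t\<bar> \<le> 8 / 5" using assms by linarith
  then have "\<bar>t\<bar>\<^sup>2 \<le> 3"
    using power_mono[of "\<bar>t\<bar>" "8 / 5" 2] by (simp add: power2_eq_square)
  then have "inverse 6 * \<bar>t\<bar> ^ 3 \<le> \<bar>t\<bar> / 2"
    using mult_left_mono[of "\<bar>t\<bar>\<^sup>2" 3 "\<bar>t\<bar>"] by (simp add: power3_eq_cube power2_eq_square)
  ultimately show ?thesis by linarith
qed

lemma abs_le_pi_half_if_cos_pos:
  fixes t :: real
  assumes "\<bar>t\<bar> \<le> pi" "0 < cos t"
  shows "\<bar>t\<bar> \<le> pi / 2"
proof (rule ccontr)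
  assume "\<not> \<bar>t\<bar> \<le> pi / 2"
  then have "cos \<bar>t\<bar> \<le> cos (pi / 2)"
    using assms(1) by (intro cos_monotone_0_pi_le) auto
  then show False using assms(2) by simp
qed

lemma abs_le_two_sqrt_cosh_sq_minus_cos_sq:
  fixes x \<theta> :: real
  assumes "\<bar>\<theta>\<bar> \<le> pi" "0 < cos \<theta>" "(x, \<theta>) \<noteq> (0, 0)"
  shows "\<bar>x\<bar> < 2 * sqrt ((cosh x)\<^sup>2 - (cos \<theta>)\<^sup>2)"
    and "\<bar>\<theta>\<bar> \<le> 2 * sqrt ((cosh x)\<^sup>2 - (cos \<theta>)\<^sup>2)"
proof -
  define m where "m = sqrt ((cosh x)\<^sup>2 - (cos \<theta>)\<^sup>2)"
  have "m = sqrt ((sinh x)\<^sup>2 + (sin \<theta>)\<^sup>2)"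
    by (simp add: m_def cosh_square_eq sin_squared_eq)
  then have "\<bar>sinh x\<bar> \<le> m" "\<bar>sin \<theta>\<bar> \<le> m"
    by (simp_all add: real_le_rsqrt)
  moreover have "\<bar>\<theta>\<bar> \<le> 2 * \<bar>sin \<theta>\<bar>"
    using assms(1,2) by (intro abs_le_two_abs_sin abs_le_pi_half_if_cos_pos)
  ultimately show "\<bar>x\<bar> < 2 * m" "\<bar>\<theta>\<bar> \<le> 2 * m"
    using abs_lt_two_abs_sinh[of x] assms(3) by (cases "x = 0"; auto)+
qed

lemma sqrt_le_cosh_sinh_combination:
  fixes a b s :: real
  assumes "\<bar>b\<bar> \<le> a"
  shows "sqrt (a\<^sup>2 - b\<^sup>2) \<le> a * cosh s - b * sinh s"
proof -
  have "\<bar>b * sinh s\<bar> \<le> a * \<bar>sinh s\<bar>"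
    using assms by (simp add: abs_mult mult_right_mono)
  also have "\<dots> \<le> a * cosh s"
    using assms sinh_le_cosh_real[of s] sinh_le_cosh_real[of "- s"] by (intro mult_left_mono) auto
  finally have nonneg: "0 \<le> a * cosh s - b * sinh s" by linarith
  have "(a * cosh s - b * sinh s)\<^sup>2 = a\<^sup>2 - b\<^sup>2 + (a * sinh s - b * cosh s)\<^sup>2"
    using cosh_square_eq[of s] by (simp add: power2_eq_square algebra_simps)
  then have "a\<^sup>2 - b\<^sup>2 \<le> (a * cosh s - b * sinh s)\<^sup>2" by simp
  then show ?thesis using nonneg real_le_lsqrt by blast
qed

lemma le_cosh_sinh_combination:
  fixes a b s :: real
  assumes "0 \<le> a" "b \<le> 0" "0 \<le> s"
  shows "a \<le> a * cosh s - b * sinh s"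
proof -
  have "a \<le> a * cosh s" using assms(1) cosh_real_ge_1[of s] by (simp add: mult_le_cancel_left1)
  moreover have "b * sinh s \<le> 0" using assms(2,3) by (simp add: mult_nonpos_nonneg)
  ultimately show ?thesis by linarith
qed

lemma power2_norm_diff_scaleR:
  fixes g v :: "'a::real_inner"
  shows "(norm (g - c *\<^sub>R v))\<^sup>2 = (norm g)\<^sup>2 - 2 * c * (g \<bullet> v) + c\<^sup>2 * (norm v)\<^sup>2"
  unfolding power2_norm_eq_inner
  by (simp add: inner_diff_left inner_diff_right inner_commute power2_eq_square algebra_simps)

lemma eq_scaleR_if_inner_norm_eq:
  fixes g v :: "'a::real_inner"
  assumes "g \<bullet> v = c * (norm v)\<^sup>2" and "(norm g)\<^sup>2 = c\<^sup>2 * (norm v)\<^sup>2"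
  shows "g = c *\<^sub>R v"
proof -
  have "(norm (g - c *\<^sub>R v))\<^sup>2 = (norm g)\<^sup>2 - 2 * c * (g \<bullet> v) + c\<^sup>2 * (norm v)\<^sup>2"
    by (rule power2_norm_diff_scaleR)
  also have "\<dots> = 0" using assms by (simp add: power2_eq_square)
  finally show ?thesis by simp
qed

lemma tendsto_difference_quotient_at_right:
  fixes f :: "real \<Rightarrow> 'a::real_normed_vector"
  assumes "(f has_vector_derivative f') (at_right x)"
  shows "((\<lambda>t. (f t - f x) /\<^sub>R (t - x)) \<longlongrightarrow> f') (at_right x)"
proof (rule LIM_zero_cancel)
  have "((\<lambda>t. (1 / norm (t - x)) *\<^sub>R (f t - (f x + (t - x) *\<^sub>R f'))) \<longlongrightarrow> 0) (at_right x)"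
    using assms by (simp add: has_vector_derivative_def has_derivative_within)
  moreover have "\<forall>\<^sub>F t in at_right x.
      (1 / norm (t - x)) *\<^sub>R (f t - (f x + (t - x) *\<^sub>R f')) = (f t - f x) /\<^sub>R (t - x) - f'"
  proof (rule eventually_at_right_less[THEN eventually_mono])
    fix t assume "x < t"
    then have "(1 / norm (t - x)) *\<^sub>R (f t - (f x + (t - x) *\<^sub>R f'))
        = (f t - f x) /\<^sub>R (t - x) - (inverse (t - x) * (t - x)) *\<^sub>R f'"
      by (simp add: divide_inverse algebra_simps)
    then show "(1 / norm (t - x)) *\<^sub>R (f t - (f x + (t - x) *\<^sub>R f')) = (f t - f x) /\<^sub>R (t - x) - f'"
      using \<open>x < t\<close> by simp
  qed
  ultimately show "((\<lambda>t. (f t - f x) /\<^sub>R (t - x) - f') \<longlongrightarrow> 0) (at_right x)"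
    by (rule Lim_transform_eventually)
qed

lemma bounded_linear_zc: "bounded_linear zc"
  unfolding zc_def[abs_def] by (intro bounded_linear_compose[OF bounded_linear_snd bounded_linear_snd])

lemma geodesic_ray_chord:
  assumes "geodesic_ray r p w" "0 \<le> s" "0 \<le> t"
  shows "(norm (r s - r t))\<^sup>2 = 2 * zc (r s) * zc (r t) * (cosh (s - t) - 1)"
proof -
  have z: "0 < zc (r s)" "0 < zc (r t)"
    using assms by (simp_all add: geodesic_ray_def in_H3_def)
  define X where "X = 1 + (norm (r s - r t))\<^sup>2 / (2 * zc (r s) * zc (r t))"
  have "arcosh X = \<bar>s - t\<bar>"
    using assms by (simp add: geodesic_ray_def hdist_def X_def)
  moreover have "1 \<le> X" using z by (simp add: X_def)
  ultimately have "X = cosh (s - t)"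
    by (metis cosh_arcosh_real cosh_real_abs)
  then show ?thesis using z by (simp add: X_def field_simps)
qed

lemma geodesic_ray_speed:
  assumes ray: "geodesic_ray r p w" and V: "(r has_vector_derivative V) (at_right 0)"
  shows "norm V = zc p"
proof -
  have p: "r 0 = p" "0 < zc p"
    using ray by (auto simp: geodesic_ray_def in_H3_def)
  have "((\<lambda>t. (norm ((r t - r 0) /\<^sub>R t))\<^sup>2) \<longlongrightarrow> (norm V)\<^sup>2) (at_right 0)"
    using tendsto_difference_quotient_at_right[OF V] by (intro tendsto_intros) simp
  moreover have "\<forall>\<^sub>F t in at_right 0.
      (norm ((r t - r 0) /\<^sub>R t))\<^sup>2 = 2 * zc p * zc (r t) * ((cosh t - 1) / t\<^sup>2)"
  proof (rule eventually_at_right_less[THEN eventually_mono])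
    fix t :: real assume "0 < t"
    then have "(norm ((r t - r 0) /\<^sub>R t))\<^sup>2 = (norm (r t - r 0))\<^sup>2 / t\<^sup>2"
      by (simp add: power_mult_distrib power_inverse divide_inverse mult.commute)
    then show "(norm ((r t - r 0) /\<^sub>R t))\<^sup>2 = 2 * zc p * zc (r t) * ((cosh t - 1) / t\<^sup>2)"
      using geodesic_ray_chord[OF ray, of t 0] p \<open>0 < t\<close> by (simp add: mult.commute)
  qed
  ultimately have "((\<lambda>t. 2 * zc p * zc (r t) * ((cosh t - 1) / t\<^sup>2)) \<longlongrightarrow> (norm V)\<^sup>2) (at_right 0)"
    by (rule Lim_transform_eventually)
  moreover have "((\<lambda>t. 2 * zc p * zc (r t) * ((cosh t - 1) / t\<^sup>2)) \<longlongrightarrow> 2 * zc p * zc p * (1 / 2))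
      (at_right 0)"
  proof -
    have "(r \<longlongrightarrow> p) (at_right 0)"
      using has_vector_derivative_continuous[OF V] p by (simp add: continuous_within)
    then have zc_lim: "((\<lambda>t. zc (r t)) \<longlongrightarrow> zc p) (at_right 0)"
      unfolding zc_def by (intro tendsto_snd)
    have cosh_lim: "((\<lambda>t. (cosh t - 1) / t\<^sup>2) \<longlongrightarrow> 1 / 2) (at_right (0::real))"
      by real_asymp
    show ?thesis by (intro tendsto_mult tendsto_const zc_lim cosh_lim)
  qed
  ultimately have "(norm V)\<^sup>2 = 2 * zc p * zc p * (1 / 2)"
    by (rule tendsto_unique[OF trivial_limit_at_right_real])
  then have "(norm V)\<^sup>2 = (zc p)\<^sup>2" by (simp add: power2_eq_square)
  then show ?thesis using p(2) by simp
qed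

lemma geodesic_ray_chord_derivative:
  assumes ray: "geodesic_ray r p w" and V: "(r has_vector_derivative V) (at_right 0)" and "0 \<le> s"
  shows "(p - r s) \<bullet> V = zc (r s) * (zc V * (cosh s - 1) - zc p * sinh s)"
proof -
  have "r 0 = p" using ray by (simp add: geodesic_ray_def)
  define y where "y = zc (r s)"
  have V': "(r has_vector_derivative V) (at 0 within {0..})"
    using V by (simp add: at_within_Ici_at_right)
  have "((\<lambda>t. (r t - r s) \<bullet> (r t - r s)) has_vector_derivative
      (r 0 - r s) \<bullet> V + V \<bullet> (r 0 - r s)) (at 0 within {0..})"
    by (rule bounded_bilinear.has_vector_derivative[OF bounded_bilinear_inner])
      (use V' in \<open>simp_all add: has_vector_derivative_diff_const\<close>)
  then have lhs: "((\<lambda>t. (norm (r t - r s))\<^sup>2) has_real_derivative 2 * ((p - r s) \<bullet> V)) (at 0 within {0..})"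
    using \<open>r 0 = p\<close>
    by (simp add: power2_norm_eq_inner inner_commute has_real_derivative_iff_has_vector_derivative)
  have "((\<lambda>t. zc (r t)) has_real_derivative zc V) (at 0 within {0..})"
    using bounded_linear.has_vector_derivative[OF bounded_linear_zc V']
    by (simp add: has_real_derivative_iff_has_vector_derivative)
  then have "((\<lambda>t. 2 * zc (r t) * y * (cosh (t - s) - 1)) has_real_derivative
      2 * zc V * y * (cosh s - 1) - 2 * zc p * y * sinh s) (at 0 within {0..})"
    by (auto intro!: derivative_eq_intros simp: \<open>r 0 = p\<close> algebra_simps)
  then have rhs: "((\<lambda>t. (norm (r t - r s))\<^sup>2) has_real_derivative
      2 * zc V * y * (cosh s - 1) - 2 * zc p * y * sinh s) (at 0 within {0..})"
    by (rule has_field_derivative_transform_within[OF _ zero_less_one])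
      (simp_all add: geodesic_ray_chord[OF ray _ \<open>0 \<le> s\<close>] y_def)
  show ?thesis
    using has_field_derivative_unique[OF lhs rhs]
    by (simp add: y_def at_within_Ici_at_right algebra_simps)
qed

lemma chord_tangent_height_identity:
  fixes a V :: pt3 and p y C S :: real
  assumes "0 < p" "norm V = p" "C\<^sup>2 - S\<^sup>2 = 1"
    and chord: "(norm a)\<^sup>2 = 2 * p * y * (C - 1)" "zc a = p - y"
    and tangent: "a \<bullet> V = y * (zc V * (C - 1) - p * S)"
  shows "y * (p * C - zc V * S) = p\<^sup>2"
proof -
  define e3 :: pt3 where "e3 = (0, 0, 1)"
  have e3: "b \<bullet> e3 = zc b" "norm e3 = 1" for b
    by (simp_all add: e3_def inner_prod_def zc_def)
  define c where "c = - y * S / p"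
  \<comment> \<open>Removing the height change y (C - 1) from the chord a gives the equality case of
    Cauchy-Schwarz for G and V.\<close>
  define G where "G = a - (y * (C - 1)) *\<^sub>R e3"
  have "G \<bullet> V = c * (norm V)\<^sup>2"
    using assms by (simp add: G_def c_def e3 inner_diff_left inner_commute[of e3] power2_eq_square algebra_simps)
  moreover have "(norm G)\<^sup>2 = c\<^sup>2 * (norm V)\<^sup>2"
  proof -
    have "(norm G)\<^sup>2 = (norm a)\<^sup>2 - 2 * (y * (C - 1)) * zc a + (y * (C - 1))\<^sup>2"
      by (simp add: G_def power2_norm_diff_scaleR e3)
    also have "\<dots> = y\<^sup>2 * (C\<^sup>2 - 1)"
      unfolding chord by (simp add: power2_eq_square algebra_simps)
    finally show ?thesis using assms by (simp add: c_def power_divide power_mult_distrib)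
  qed
  ultimately have "G = c *\<^sub>R V" by (rule eq_scaleR_if_inner_norm_eq)
  then have "zc G = zc (c *\<^sub>R V)" by (rule arg_cong)
  then have "zc a - y * (C - 1) = c * zc V" by (simp add: G_def e3_def zc_def)
  then show ?thesis using assms(1) chord(2) by (simp add: c_def field_simps power2_eq_square)
qed

lemma geodesic_ray_height_formula:
  assumes ray: "geodesic_ray r p w" and V: "(r has_vector_derivative V) (at_right 0)" and "0 \<le> s"
  shows "zc (r s) * (zc p * cosh s - zc V * sinh s) = (zc p)\<^sup>2"
proof (rule chord_tangent_height_identity)
  have "r 0 = p" using ray by (simp add: geodesic_ray_def)
  then show "(norm (p - r s))\<^sup>2 = 2 * zc p * zc (r s) * (cosh s - 1)"
    using geodesic_ray_chord[OF ray _ \<open>0 \<le> s\<close>, of 0] by simp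
  show "0 < zc p" using ray by (auto simp: geodesic_ray_def in_H3_def)
  show "zc (p - r s) = zc p - zc (r s)" by (simp add: zc_def)
qed (use geodesic_ray_speed[OF ray V] geodesic_ray_chord_derivative[OF ray V \<open>0 \<le> s\<close>]
      hyperbolic_pythagoras in auto)

lemma geodesic_ray_zc:
  assumes ray: "geodesic_ray r p w" and "norm w = 1" "0 \<le> s"
  shows "zc (r s) * (cosh s - zc w * sinh s) = zc p"
proof -
  obtain k where "0 < k" and V: "(r has_vector_derivative k *\<^sub>R w) (at_right 0)"
    using ray by (auto simp: geodesic_ray_def at_within_Ici_at_right)
  have p: "0 < zc p" using ray by (auto simp: geodesic_ray_def in_H3_def)
  have "k = zc p" using geodesic_ray_speed[OF ray V] \<open>norm w = 1\<close> \<open>0 < k\<close> by simp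
  then have "zc p * (zc (r s) * (cosh s - zc w * sinh s)) = zc p * zc p"
    using geodesic_ray_height_formula[OF ray V \<open>0 \<le> s\<close>]
    by (simp add: zc_def algebra_simps power2_eq_square)
  then show ?thesis using p by simp
qed

lemma zc_gam: "zc (gam c1 c2 u1 u2 x) = 1 / cosh x"
  by (simp add: gam_def zc_def)

lemma zc_nb_dir: "zc (nb_dir u1 u2 x \<theta>) = cos \<theta> / cosh x"
  by (simp add: nb_dir_def nv_def nh_def zc_def)

lemma power2_norm_pt3: "(norm p)\<^sup>2 = (fst p)\<^sup>2 + (fst (snd p))\<^sup>2 + (zc p)\<^sup>2"
  by (cases p) (simp add: norm_Pair zc_def)

lemma norm_nb_dir:
  assumes "u1\<^sup>2 + u2\<^sup>2 = 1"
  shows "norm (nb_dir u1 u2 x \<theta>) = 1"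
proof -
  have tanh: "(tanh x)\<^sup>2 + (1 / cosh x)\<^sup>2 = 1"
    using cosh_real_pos[of x] sinh_square_eq[of x] by (simp add: tanh_def power_divide field_simps)
  have "(norm (nb_dir u1 u2 x \<theta>))\<^sup>2
      = (cos \<theta>)\<^sup>2 * ((tanh x)\<^sup>2 * (u1\<^sup>2 + u2\<^sup>2) + (1 / cosh x)\<^sup>2) + (sin \<theta>)\<^sup>2 * (u1\<^sup>2 + u2\<^sup>2)"
    unfolding power2_norm_pt3 by (simp add: nb_dir_def nv_def nh_def zc_def power2_eq_square algebra_simps)
  also have "\<dots> = 1" using assms tanh by simp
  finally show ?thesis
    using norm_ge_zero[of "nb_dir u1 u2 x \<theta>"] by (auto simp: power2_eq_1_iff)
qed

lemma normal_ray_zc: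
  assumes "u1\<^sup>2 + u2\<^sup>2 = 1" and ray: "geodesic_ray r (nb_base c1 c2 u1 u2 x) (nb_dir u1 u2 x \<theta>)"
    and "0 \<le> s"
  shows "zc (r s) * (cosh x * cosh s - cos \<theta> * sinh s) = 1"
  using geodesic_ray_zc[OF ray norm_nb_dir[OF assms(1)] \<open>0 \<le> s\<close>] cosh_real_pos[of x]
  by (simp add: nb_base_def zc_gam zc_nb_dir field_simps)

lemma exp_neg_ray_top_height_ge:
  assumes "\<forall>s\<ge>0. in_H3 (r s)" and "0 < m" and "\<And>s. 0 \<le> s \<Longrightarrow> m * zc (r s) \<le> 1"
  shows "m \<le> exp (- ray_top_height r)"
proof -
  have "height (r s) \<le> - ln m" if "0 \<le> s" for s
  proof -
    have "0 < zc (r s)" using assms(1) that by (simp add: in_H3_def)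
    then have "ln (zc (r s)) \<le> ln (1 / m)"
      using assms(2) assms(3)[OF that] by (simp add: field_simps)
    then show ?thesis using assms(2) by (simp add: height_def ln_div)
  qed
  then have "ray_top_height r \<le> - ln m"
    unfolding ray_top_height_def by (intro cSUP_least) auto
  then have "exp (ln m) \<le> exp (- ray_top_height r)" by simp
  then show ?thesis using assms(2) by simp
qed

lemma normal_ray_exp_neg_top_height_ge:
  assumes "u1\<^sup>2 + u2\<^sup>2 = 1" and ray: "geodesic_ray r (nb_base c1 c2 u1 u2 x) (nb_dir u1 u2 x \<theta>)"
    and "0 < m" and m: "\<And>s. 0 \<le> s \<Longrightarrow> m \<le> cosh x * cosh s - cos \<theta> * sinh s"
  shows "m \<le> exp (- ray_top_height r)"
proof (rule exp_neg_ray_top_height_ge[OF _ \<open>0 < m\<close>])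
  show pos: "\<forall>s\<ge>0. in_H3 (r s)" using ray by (simp add: geodesic_ray_def)
  fix s :: real assume "0 \<le> s"
  then have "m * zc (r s) \<le> (cosh x * cosh s - cos \<theta> * sinh s) * zc (r s)"
    using pos m by (intro mult_right_mono) (auto simp: in_H3_def)
  then show "m * zc (r s) \<le> 1"
    using normal_ray_zc[OF assms(1) ray \<open>0 \<le> s\<close>] by (simp add: mult.commute)
qed

theorem lemma5p8:
  fixes c1 c2 u1 u2 x \<theta> :: real and r :: "real \<Rightarrow> pt3"
  assumes "u1\<^sup>2 + u2\<^sup>2 = 1"
    and "\<bar>\<theta>\<bar> \<le> pi"
    and "(x, \<theta>) \<noteq> (0, 0)"
    and "geodesic_ray r (nb_base c1 c2 u1 u2 x) (nb_dir u1 u2 x \<theta>)"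
  shows "\<bar>x\<bar> < 2 * exp (- ray_top_height r)
       \<and> (ray_top_height r > 0 \<longrightarrow> \<bar>\<theta>\<bar> \<le> 2 * exp (- ray_top_height r))"
proof (cases "cos \<theta> \<le> 0")
  case True
  then have "cosh x \<le> exp (- ray_top_height r)"
    using cosh_real_pos[of x]
    by (intro normal_ray_exp_neg_top_height_ge[OF assms(1,4)] le_cosh_sinh_combination) auto
  moreover from this have "ray_top_height r \<le> 0"
    using cosh_real_ge_1[of x] one_le_exp_iff[of "- ray_top_height r"] by linarith
  ultimately show ?thesis
    using abs_lt_two_cosh[of x] by auto
next
  case False
  define m where "m = sqrt ((cosh x)\<^sup>2 - (cos \<theta>)\<^sup>2)"
  have bounds: "\<bar>x\<bar> < 2 * m" "\<bar>\<theta>\<bar> \<le> 2 * m"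
    using abs_le_two_sqrt_cosh_sq_minus_cos_sq[OF assms(2) _ assms(3)] False by (simp_all add: m_def)
  have "0 < m" using bounds(1) by linarith
  moreover have "m \<le> cosh x * cosh s - cos \<theta> * sinh s" for s
    unfolding m_def using abs_cos_le_one[of \<theta>] cosh_real_ge_1[of x]
    by (intro sqrt_le_cosh_sinh_combination) linarith
  ultimately have "m \<le> exp (- ray_top_height r)"
    by (rule normal_ray_exp_neg_top_height_ge[OF assms(1,4)])
  then show ?thesis using bounds by auto
qed

end
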